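(* Let $N\ge1$, $q\in\mathbb{C}$ with $0<|q|<1$, $j\in\{1,\dots,N\}$, and $s,w_2\in\mathbb{C}$, and let $C$ be a simple closed contour in the $w_1$-plane encircling $w_1=0$, $s$, $qw_2$, $qw_2^{-1}$ but not $s^{-1}$, $q^{-1}w_2$, $q^{-1}w_2^{-1}$. With $H^{2j-1}_\epsilon(w_1,w_2)$ as in the context, the following operator identities hold: (1) $\oint_C\frac{dw_1}{w_1}\sum_{\epsilon=\pm}\epsilon q^\epsilon\Big(q^\epsilon w_1+\frac{1}{q^\epsilon w_1}\Big)(1-qw_1w_2)H^{2j-1}_\epsilon(w_1,w_2)=\oint_C\frac{dw_1}{w_1}q\Big(qw_1+\frac{1}{qw_1}\Big)(1-w_1^2)H^{2j-1}_+(w_1,w_2)$; (2) $\oint_C\frac{dw_1}{w_1}\sum_{\epsilon=\pm}\epsilon q^\epsilon\Big(q^\epsilon w_1+\frac{1}{q^\epsilon w_1}\Big)(1-sw_1)(1-qw_1w_2)H^{2j-1}_\epsilon(w_1,w_2)=(1-qsw_2)\oint_C\frac{dw_1}{w_1}q\Big(qw_1+\frac{1}{qw_1}\Big)(1-w_1^2)H^{2j-1}_+(w_1,w_2)$; (3) $\oint_C\frac{dw_1}{w_1}\sum_{\epsilon=\pm}\epsilon q^\epsilon\Big(q^\epsilon w_1+\frac{1}{q^\epsilon w_1}\Big)\frac{1-qw_1w_2}{1-s/w_1}H^{2j-1}_\epsilon(w_1,w_2)=(1-qsw_2)\oint_C\frac{dw_1}{w_1}q\Big(qw_1+\frac{1}{qw_1}\Big)\frac{1-w_1^2}{(1-s/w_1)(1-sw_1)}H^{2j-1}_+(w_1,w_2)$;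 (4) $\oint_C\frac{dw_1}{w_1}\sum_{\epsilon=\pm}\epsilon q^\epsilon\Big(q^\epsilon w_1+\frac{1}{q^\epsilon w_1}\Big)w_1(1-qw_1w_2)H^{2j-1}_\epsilon(w_1,w_2)=q^2w_2\oint_C\frac{dw_1}{w_1}\Big(qw_1+\frac{1}{qw_1}\Big)(1-w_1^2)H^{2j-1}_+(w_1,w_2)$. Moreover, the integral $\oint_C\frac{dw_1}{w_1}\Big(qw_1+\frac{1}{qw_1}\Big)\frac{1-w_1^2}{(1-s/w_1)(1-sw_1)}H^{2j-1}_+(w_1,w_2)$ is invariant under $w_2\to w_2^{-1}$.
   Context: $[n]_q=\frac{q^n-q^{-n}}{q-q^{-1}}$. Bosons $a^i_m$ ($1\le i\le 2N$, $m\in\mathbb{Z}$) and $c^j_m$ ($1\le j\le N$) satisfy $[a^i_m,a^k_n]=(-1)^{i+1}\delta_{i,k}\delta_{m+n,0}\frac{[m]_q^2}{m}$, $[c^j_m,c^l_n]=\delta_{j,l}\delta_{m+n,0}\frac{[m]_q^2}{m}$ ($m\ne0$), other commutators zero. Set $A^i_m=(-1)^{i+1}(a^i_m+a^{i+1}_m)$ ($1\le i\le 2N-1$), $A^i_+(z)=-\sum_{m\ge1}\frac{A^i_m}{[m]_q}q^{m/2}z^{-m}$ and $c^j_+(z)=-\sum_{m\ge1}\frac{c^j_m}{[m]_q}z^{-m}$. For $\epsilon=\pm$ (identified with $\pm1$ in exponents), $$H^{2j-1}_\epsilon(w_1,w_2)=\frac{\exp\big(-c^j_+(q^{1+\epsilon}w_1)-c^j_+(q^{1-\epsilon}/w_1)-A^{2j-1}_+(qw_1)-A^{2j-1}_+(q/w_1)\big)}{(1-q^\epsilon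 w_1w_2)(1-q^\epsilon w_1/w_2)}.$$ The exponentials involve only the modes $a_m,c_m$ with $m>0$, so on any vector of the bosonic Fock space their matrix elements are Laurent polynomials in $w_1$; the integrals are understood in this sense. *)

theory Defs
  imports "HOL-Complex_Analysis.Complex_Analysis" "HOL-Library.Poly_Mapping"
begin

definition qint :: "complex \<Rightarrow> nat \<Rightarrow> complex" where
  "qint q m = (q ^ m - inverse q ^ m) / (q - inverse q)"

text \<open>Oscillator labels: ModeA i m stands for the pair a^i_{-m} / a^i_m (m >= 1),
  ModeC j m for c^j_{-m} / c^j_m.\<close>
datatype mode = ModeA nat nat | ModeC nat nat

fun valid_mode :: "nat \<Rightarrow> mode \<Rightarrow> bool" where
  "valid_mode N (ModeA i m) = (1 \<le> i \<and> i \<le> 2 * N \<and> 1 \<le> m)"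
| "valid_mode N (ModeC j m) = (1 \<le> j \<and> j \<le> N \<and> 1 \<le> m)"

text \<open>Commutator constant [b_m, b_{-m}] of each oscillator.\<close>
fun kappa :: "complex \<Rightarrow> mode \<Rightarrow> complex" where
  "kappa q (ModeA i m) = (-1) ^ (i + 1) * (qint q m)\<^sup>2 / of_nat m"
| "kappa q (ModeC j m) = (qint q m)\<^sup>2 / of_nat m"

text \<open>Bosonic Fock space realised as the polynomial ring in the creation modes
  (the variable of a mode x is the creation operator b_{-m}); the vacuum is 1.\<close>
type_synonym fock = "(mode \<Rightarrow>\<^sub>0 nat) \<Rightarrow>\<^sub>0 complex"

definition fock_space :: "nat \<Rightarrow> fock set" where
  "fock_space N = {p::fock. \<forall>\<mu>\<in>Poly_Mapping.keys p. \<forall>x\<in>Poly_Mapping.keys \<mu>. valid_mode N x}"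

text \<open>The annihilation operator b_m of mode x acts as kappa(x) times the partial derivative
  in the variable x.  ann_comb q f is the operator  sum_x f(x) b_x  (finite on every vector).\<close>
definition ann_comb :: "complex \<Rightarrow> (mode \<Rightarrow> complex) \<Rightarrow> fock \<Rightarrow> fock" where
  "ann_comb q f p = (\<Sum>\<mu>\<in>Poly_Mapping.keys p. \<Sum>x\<in>Poly_Mapping.keys \<mu>.
      Poly_Mapping.single (\<mu> - Poly_Mapping.single x 1)
        (f x * kappa q x * of_nat (Poly_Mapping.lookup \<mu> x) * Poly_Mapping.lookup p \<mu>))"

text \<open>Exponential of an operator applied to a vector, given by its coefficient function
  (the series terminates on every Fock vector).\<close>
definition op_exp :: "(fock \<Rightarrow> fock) \<Rightarrow> fock \<Rightarrow> (mode \<Rightarrow>\<^sub>0 nat) \<Rightarrow> complex" where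
  "op_exp D p \<mu> = suminf (\<lambda>k. Poly_Mapping.lookup ((D ^^ k) p) \<mu> / fact k)"

text \<open>c^j_+(z) = - sum_{m>=1} c^j_m/[m]_q z^{-m}, as coefficient function on modes.\<close>
definition cplus :: "complex \<Rightarrow> nat \<Rightarrow> complex \<Rightarrow> mode \<Rightarrow> complex" where
  "cplus q j z x = (case x of
       ModeC j' m \<Rightarrow> if j' = j \<and> 1 \<le> m then - (inverse z ^ m) / qint q m else 0
     | ModeA _ _ \<Rightarrow> 0)"

text \<open>A^i_+(z) = - sum_{m>=1} A^i_m/[m]_q q^{m/2} z^{-m}, with
  A^i_m = (-1)^{i+1}(a^i_m + a^{i+1}_m); qh is a chosen square root of q (q^{m/2} = qh^m).\<close>
definition Aplus :: "complex \<Rightarrow> complex \<Rightarrow> nat \<Rightarrow> complex \<Rightarrow> mode \<Rightarrow> complex" where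
  "Aplus q qh i z x = (case x of
       ModeA i' m \<Rightarrow> if (i' = i \<or> i' = i + 1) \<and> 1 \<le> m
                      then - ((-1) ^ (i + 1) * qh ^ m * inverse z ^ m) / qint q m else 0
     | ModeC _ _ \<Rightarrow> 0)"

definition Hop :: "complex \<Rightarrow> complex \<Rightarrow> nat \<Rightarrow> int \<Rightarrow> complex \<Rightarrow> complex \<Rightarrow> fock
                   \<Rightarrow> (mode \<Rightarrow>\<^sub>0 nat) \<Rightarrow> complex" where
  "Hop q qh j e w1 w2 v \<mu> =
     op_exp (ann_comb q (\<lambda>x. - cplus q j (q powi (1 + e) * w1) x
                             - cplus q j (q powi (1 - e) / w1) x
                             - Aplus q qh (2 * j - 1) (q * w1) x
                             - Aplus q qh (2 * j - 1) (q / w1) x)) v \<mu>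
     / ((1 - q powi e * w1 * w2) * (1 - q powi e * w1 / w2))"

definition oint :: "(real \<Rightarrow> complex) \<Rightarrow> (complex \<Rightarrow> (mode \<Rightarrow>\<^sub>0 nat) \<Rightarrow> complex)
                    \<Rightarrow> (mode \<Rightarrow>\<^sub>0 nat) \<Rightarrow> complex" where
  "oint \<gamma> F \<mu> = contour_integral \<gamma> (\<lambda>w. F w \<mu>)"

end

theory Submission
  imports Defs
begin

text \<open>The exponential part of \<open>H\<close> is holomorphic in \<open>w\<^sub>1\<close> on \<open>\<complex> - {0}\<close> (on a fixed Fock vector its
  series terminates), and \<open>H\<^sub>-(w) = q\<^sup>2 w\<^sup>-\<^sup>2 H\<^sub>+(1/w)\<close>. By this reflection each left-hand integrand is
  the right-hand one plus \<open>A(w) - A(1/w)/w\<^sup>2\<close>, where \<open>A\<close> has poles only at \<open>0\<close>, \<open>1/s\<close> and the two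
  poles of \<open>H\<^sub>+\<close> outside the contour. The contour separates each of these poles from its inverse,
  so after the substitution \<open>w \<mapsto> 1/w\<close> the residue theorem shows that \<open>A(w) - A(1/w)/w\<^sup>2\<close>
  integrates to zero. Invariance under \<open>w\<^sub>2 \<mapsto> 1/w\<^sub>2\<close> holds already for the integrand.\<close>

lemma path_image_inverse_comp:
  "path_image (inverse \<circ> \<gamma>) = inverse ` path_image (\<gamma> :: real \<Rightarrow> complex)"
  by (simp add: path_image_compose)

lemma valid_path_inverse_comp:
  fixes \<gamma> :: "real \<Rightarrow> complex"
  assumes "valid_path \<gamma>" "0 \<notin> path_image \<gamma>"
  shows "valid_path (inverse \<circ> \<gamma>)"
proof (rule valid_path_compose_holomorphic[OF assms(1)])
  show "inverse holomorphic_on -{0}" by (auto intro!: holomorphic_intros)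
qed (use assms in auto)

lemma contour_integral_inverse_comp:
  fixes \<gamma> :: "real \<Rightarrow> complex"
  assumes "valid_path \<gamma>" "0 \<notin> path_image \<gamma>"
  shows "contour_integral (inverse \<circ> \<gamma>) f = contour_integral \<gamma> (\<lambda>w. - f (1/w) / w^2)"
proof -
  have "contour_integral (inverse \<circ> \<gamma>) f = contour_integral \<gamma> (\<lambda>w. deriv inverse w * f (inverse w))"
    by (rule contour_integral_comp_analyticW[where s="-{0}"])
       (use assms in \<open>auto intro!: analytic_intros\<close>)
  also have "\<dots> = contour_integral \<gamma> (\<lambda>w. - f (1/w) / w^2)"
  proof (rule contour_integral_eq)
    fix w assume "w \<in> path_image \<gamma>"
    then have "w \<noteq> 0" using assms by auto
    then have "deriv inverse w = - (inverse w * inverse w)"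
      using DERIV_inverse[of w UNIV] DERIV_imp_deriv by (simp add: power2_eq_square divide_inverse)
    then show "deriv inverse w * f (inverse w) = - f (1/w) / w^2"
      by (simp add: power2_eq_square divide_inverse)
  qed
  finally show ?thesis .
qed

lemma winding_number_inverse_comp_zero:
  fixes \<gamma> :: "real \<Rightarrow> complex"
  assumes "valid_path \<gamma>" "0 \<notin> path_image \<gamma>"
  shows "winding_number (inverse \<circ> \<gamma>) 0 = - winding_number \<gamma> 0"
proof -
  have "0 \<notin> path_image (inverse \<circ> \<gamma>)" using assms by (auto simp: path_image_inverse_comp)
  then have "winding_number (inverse \<circ> \<gamma>) 0
      = 1/(2*pi*\<i>) * contour_integral (inverse \<circ> \<gamma>) (\<lambda>w. 1/(w - 0))"
    by (rule winding_number_valid_path[OF valid_path_inverse_comp[OF assms]])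
  also have "\<dots> = 1/(2*pi*\<i>) * contour_integral \<gamma> (\<lambda>w. - (1/(w - 0)))"
    unfolding contour_integral_inverse_comp[OF assms]
    by (intro arg_cong2[where f="(*)"] refl contour_integral_eq) (simp add: power2_eq_square)
  also have "\<dots> = - winding_number \<gamma> 0"
    by (simp add: contour_integral_neg winding_number_valid_path[OF assms])
  finally show ?thesis .
qed

lemma winding_number_inverse_comp:
  fixes \<gamma> :: "real \<Rightarrow> complex"
  assumes "valid_path \<gamma>" "0 \<notin> path_image \<gamma>" "p \<noteq> 0" "p \<notin> path_image \<gamma>"
  shows "winding_number (inverse \<circ> \<gamma>) (1/p) = winding_number \<gamma> p - winding_number \<gamma> 0"
proof -
  have "1/p \<notin> path_image (inverse \<circ> \<gamma>)"
    using assms by (auto simp: path_image_inverse_comp divide_inverse)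
  then have "winding_number (inverse \<circ> \<gamma>) (1/p)
      = 1/(2*pi*\<i>) * contour_integral (inverse \<circ> \<gamma>) (\<lambda>w. 1/(w - 1/p))"
    by (rule winding_number_valid_path[OF valid_path_inverse_comp[OF assms(1,2)]])
  also have "\<dots> = 1/(2*pi*\<i>) * contour_integral \<gamma> (\<lambda>w. 1/(w - p) - 1/(w - 0))"
    unfolding contour_integral_inverse_comp[OF assms(1,2)]
  proof (intro arg_cong2[where f="(*)"] refl contour_integral_eq)
    fix w assume "w \<in> path_image \<gamma>"
    then have "w \<noteq> 0" "w \<noteq> p" using assms by auto
    then show "- (1 / (1 / w - 1 / p)) / w\<^sup>2 = 1 / (w - p) - 1 / (w - 0)"
      using assms(3) by (simp add: field_simps power2_eq_square)
  qed
  also have "\<dots> = 1/(2*pi*\<i>) * (contour_integral \<gamma> (\<lambda>w. 1/(w - p)) - contour_integral \<gamma> (\<lambda>w. 1/(w - 0)))"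
    using contour_integral_diff[OF contour_integrable_inversediff[of \<gamma> p]
        contour_integrable_inversediff[of \<gamma> 0]] assms by simp
  also have "\<dots> = winding_number \<gamma> p - winding_number \<gamma> 0"
    by (simp only: right_diff_distrib winding_number_valid_path[OF assms(1,4)]
                   winding_number_valid_path[OF assms(1,2)])
  finally show ?thesis .
qed

lemma winding_number_inverse_comp_eq_neg:
  fixes \<gamma> :: "real \<Rightarrow> complex"
  assumes \<gamma>: "valid_path \<gamma>" "0 \<notin> path_image \<gamma>"
    and inverse_p: "p \<noteq> 0 \<Longrightarrow> 1/p \<notin> path_image \<gamma> \<and>
          winding_number \<gamma> p + winding_number \<gamma> (1/p) = winding_number \<gamma> 0"
  shows "winding_number (inverse \<circ> \<gamma>) p = - winding_number \<gamma> p"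
proof (cases "p = 0")
  case True
  then show ?thesis using winding_number_inverse_comp_zero[OF \<gamma>] by simp
next
  case False
  with inverse_p have "1/p \<notin> path_image \<gamma>"
    and sum: "winding_number \<gamma> p + winding_number \<gamma> (1/p) = winding_number \<gamma> 0" by auto
  moreover have "winding_number (inverse \<circ> \<gamma>) (1/(1/p)) = winding_number \<gamma> (1/p) - winding_number \<gamma> 0"
    by (rule winding_number_inverse_comp) (use \<gamma> False \<open>1/p \<notin> _\<close> in auto)
  ultimately show ?thesis by (simp flip: sum)
qed

text \<open>The substitution \<open>w \<mapsto> 1/w\<close> turns \<open>\<oint>\<^sub>\<gamma> A(1/w) dw/w\<^sup>2\<close> into minus the integral of \<open>A\<close>
  over \<open>inverse \<circ> \<gamma>\<close>; the hypothesis on the poles says exactly that this inverted contour winds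
  around every pole of \<open>A\<close> as often as \<open>\<gamma>\<close> does, but in the opposite direction, so by the residue
  theorem both terms have the same integral.\<close>

lemma has_contour_integral_inversion_antisymmetric:
  fixes \<gamma> :: "real \<Rightarrow> complex"
  assumes \<gamma>: "valid_path \<gamma>" "pathfinish \<gamma> = pathstart \<gamma>" "0 \<notin> path_image \<gamma>"
    and A: "finite P" "A holomorphic_on - P"
    and poles: "\<And>p. p \<in> P \<Longrightarrow> p \<notin> path_image \<gamma>"
    and inverse_poles: "\<And>p. p \<in> P \<Longrightarrow> p \<noteq> 0 \<Longrightarrow> 1/p \<notin> path_image \<gamma> \<and>
          winding_number \<gamma> p + winding_number \<gamma> (1/p) = winding_number \<gamma> 0"
  shows "((\<lambda>w. A w - A (1/w) / w^2) has_contour_integral 0) \<gamma>"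
proof -
  define \<delta> where "\<delta> = inverse \<circ> \<gamma>"
  have inverse_off_poles: "inverse w \<notin> P" if "w \<in> path_image \<gamma>" for w
  proof
    assume "inverse w \<in> P"
    moreover have "inverse w \<noteq> 0" using that \<gamma>(3) by auto
    ultimately have "1 / inverse w \<notin> path_image \<gamma>" using inverse_poles by blast
    then show False using that by (simp add: divide_inverse)
  qed
  have wind_\<delta>: "winding_number \<delta> p = - winding_number \<gamma> p" if "p \<in> P" for p
    unfolding \<delta>_def by (rule winding_number_inverse_comp_eq_neg) (use \<gamma> inverse_poles that in auto)
  have \<gamma>_off: "path_image \<gamma> \<subseteq> UNIV - P" using poles by auto
  have \<delta>_off: "path_image \<delta> \<subseteq> UNIV - P"
    using inverse_off_poles by (auto simp: \<delta>_def path_image_inverse_comp)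
  have \<delta>: "valid_path \<delta>" "pathfinish \<delta> = pathstart \<delta>"
    using \<gamma> by (simp_all add: \<delta>_def valid_path_inverse_comp pathfinish_compose pathstart_compose)
  have holo: "A holomorphic_on UNIV - P" using A(2) by (simp add: Compl_eq_Diff_UNIV)
  have "contour_integral \<delta> A = 2 * pi * \<i> * (\<Sum>p\<in>P. winding_number \<delta> p * residue A p)"
    by (rule Residue_theorem) (use A(1) holo \<delta> \<delta>_off in auto)
  also have "\<dots> = - (2 * pi * \<i> * (\<Sum>p\<in>P. winding_number \<gamma> p * residue A p))"
    by (simp add: wind_\<delta> sum_negf)
  also have "2 * pi * \<i> * (\<Sum>p\<in>P. winding_number \<gamma> p * residue A p) = contour_integral \<gamma> A"
    by (rule Residue_theorem[symmetric]) (use A(1) holo \<gamma> \<gamma>_off in auto)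
  finally have \<delta>_integral: "contour_integral \<delta> A = - contour_integral \<gamma> A" .
  have open_off: "open (- ({0} \<union> inverse ` P))" using A(1) by (auto intro: finite_imp_closed)
  have "(A \<circ> inverse) holomorphic_on - ({0} \<union> inverse ` P)"
    by (rule holomorphic_on_compose_gen[OF _ A(2)])
       (auto intro!: holomorphic_intros, metis image_eqI inverse_inverse_eq)
  then have "(\<lambda>w. - A (1/w) / w^2) holomorphic_on - ({0} \<union> inverse ` P)"
    by (auto intro!: holomorphic_intros simp: o_def divide_inverse)
  moreover have "path_image \<gamma> \<subseteq> - ({0} \<union> inverse ` P)"
    using \<gamma>(3) inverse_off_poles by (force simp: image_iff)
  ultimately have "((\<lambda>w. - A (1/w) / w^2) has_contour_integral contour_integral \<delta> A) \<gamma>"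
    unfolding \<delta>_def contour_integral_inverse_comp[OF \<gamma>(1,3)]
    by (intro has_contour_integral_integral contour_integrable_holomorphic_simple[OF _ open_off \<gamma>(1)])
  moreover have "(A has_contour_integral contour_integral \<gamma> A) \<gamma>"
    using A(1) holo \<gamma>_off
    by (intro has_contour_integral_integral contour_integrable_holomorphic_simple[OF _ _ \<gamma>(1)])
       (auto intro: finite_imp_closed)
  ultimately show ?thesis
    using has_contour_integral_add \<delta>_integral by fastforce
qed

lemma simple_closed_path_winding_number_eq:
  fixes \<gamma> :: "real \<Rightarrow> complex"
  assumes "simple_path \<gamma>" "pathfinish \<gamma> = pathstart \<gamma>"
    and "a \<notin> path_image \<gamma>" "winding_number \<gamma> a \<noteq> 0"
    and "b \<notin> path_image \<gamma>" "winding_number \<gamma> b \<noteq> 0"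
  shows "winding_number \<gamma> a = winding_number \<gamma> b"
proof -
  have inside: "z \<in> inside (path_image \<gamma>)"
    if "z \<notin> path_image \<gamma>" "winding_number \<gamma> z \<noteq> 0" for z
    using that winding_number_zero_in_outside[OF simple_path_imp_path[OF assms(1)] assms(2)]
      inside_Un_outside by blast
  show ?thesis
    using simple_closed_path_winding_number_inside[OF assms(1)] inside[OF assms(3,4)] inside[OF assms(5,6)]
    by metis
qed

definition total_degree :: "('a \<Rightarrow>\<^sub>0 nat) \<Rightarrow> nat" where
  "total_degree \<mu> = (\<Sum>x\<in>Poly_Mapping.keys \<mu>. Poly_Mapping.lookup \<mu> x)"

lemma total_degree_lower:
  assumes "x \<in> Poly_Mapping.keys \<mu>"
  shows "total_degree (\<mu> - Poly_Mapping.single x 1) < total_degree \<mu>"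
proof -
  define \<nu> where "\<nu> = \<mu> - Poly_Mapping.single x 1"
  have lookup_\<nu>: "Poly_Mapping.lookup \<nu> y = Poly_Mapping.lookup \<mu> y - (if x = y then 1 else 0)" for y
    by (simp add: \<nu>_def lookup_minus lookup_single)
  have "total_degree \<nu> = (\<Sum>y\<in>Poly_Mapping.keys \<mu>. Poly_Mapping.lookup \<nu> y)"
    unfolding total_degree_def by (rule sum.mono_neutral_left) (auto simp: in_keys_iff lookup_\<nu>)
  also have "\<dots> < (\<Sum>y\<in>Poly_Mapping.keys \<mu>. Poly_Mapping.lookup \<mu> y)"
    by (rule sum_strict_mono_ex1) (use assms in \<open>auto simp: lookup_\<nu> in_keys_iff\<close>)
  finally show ?thesis by (simp add: \<nu>_def total_degree_def)
qed

definition lowered_monomials :: "('a \<Rightarrow>\<^sub>0 nat) set \<Rightarrow> ('a \<Rightarrow>\<^sub>0 nat) set" where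
  "lowered_monomials K = {\<mu> - Poly_Mapping.single x 1 | \<mu> x. \<mu> \<in> K \<and> x \<in> Poly_Mapping.keys \<mu>}"

lemma finite_lowered_monomials: "finite K \<Longrightarrow> finite (lowered_monomials K)"
proof -
  assume "finite K"
  moreover have "lowered_monomials K
      = (\<lambda>(\<mu>, x). \<mu> - Poly_Mapping.single x 1) ` (SIGMA \<mu>:K. Poly_Mapping.keys \<mu>)"
    unfolding lowered_monomials_def by auto
  ultimately show ?thesis by auto
qed

lemma keys_ann_comb_subset:
  "Poly_Mapping.keys p \<subseteq> K \<Longrightarrow> Poly_Mapping.keys (ann_comb q f p) \<subseteq> lowered_monomials K"
  unfolding ann_comb_def lowered_monomials_def
  by (fastforce dest!: subsetD[OF keys_sum] split: if_splits)

lemma lookup_ann_comb: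
  assumes "finite K" "Poly_Mapping.keys p \<subseteq> K"
  shows "Poly_Mapping.lookup (ann_comb q f p) \<nu> =
    (\<Sum>\<mu>\<in>K. \<Sum>x\<in>Poly_Mapping.keys \<mu>. if \<mu> - Poly_Mapping.single x 1 = \<nu>
         then f x * kappa q x * of_nat (Poly_Mapping.lookup \<mu> x) * Poly_Mapping.lookup p \<mu> else 0)"
  unfolding ann_comb_def lookup_sum lookup_single when_def
  by (rule sum.mono_neutral_left) (use assms in \<open>auto simp: in_keys_iff intro!: sum.neutral\<close>)

lemma holomorphic_on_if_const: "g holomorphic_on S \<Longrightarrow> (\<lambda>w. if c then g w else 0) holomorphic_on S"
  by (cases c) auto

lemma holomorphic_lookup_ann_comb_iterate:
  assumes "\<And>x. (\<lambda>w. f w x) holomorphic_on S"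
  shows "\<exists>K. finite K \<and> (\<forall>w. Poly_Mapping.keys ((ann_comb q (f w) ^^ k) v) \<subseteq> K) \<and>
     (\<forall>\<nu>. (\<lambda>w. Poly_Mapping.lookup ((ann_comb q (f w) ^^ k) v) \<nu>) holomorphic_on S)"
proof (induction k)
  case 0
  then show ?case by (intro exI[of _ "Poly_Mapping.keys v"]) auto
next
  case (Suc k)
  then obtain K where K: "finite K" "\<And>w. Poly_Mapping.keys ((ann_comb q (f w) ^^ k) v) \<subseteq> K"
     "\<And>\<nu>. (\<lambda>w. Poly_Mapping.lookup ((ann_comb q (f w) ^^ k) v) \<nu>) holomorphic_on S" by blast
  show ?case
  proof (intro exI[of _ "lowered_monomials K"] conjI allI)
    show "finite (lowered_monomials K)" by (rule finite_lowered_monomials[OF K(1)])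
    show "Poly_Mapping.keys ((ann_comb q (f w) ^^ Suc k) v) \<subseteq> lowered_monomials K" for w
      by (simp add: keys_ann_comb_subset K(2))
    show "(\<lambda>w. Poly_Mapping.lookup ((ann_comb q (f w) ^^ Suc k) v) \<nu>) holomorphic_on S" for \<nu>
      by (simp add: lookup_ann_comb[OF K(1) K(2)])
         (intro holomorphic_intros holomorphic_on_if_const assms K(3))
  qed
qed

lemma total_degree_ann_comb_iterate:
  assumes "\<forall>\<mu>\<in>Poly_Mapping.keys p. total_degree \<mu> < B"
  shows "\<forall>\<nu>\<in>Poly_Mapping.keys ((ann_comb q f ^^ k) p). total_degree \<nu> + k < B"
proof (induction k)
  case 0
  then show ?case using assms by simp
next
  case (Suc k)
  show ?case
  proof
    fix \<nu> assume "\<nu> \<in> Poly_Mapping.keys ((ann_comb q f ^^ Suc k) p)"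
    then obtain \<mu> x where \<mu>: "\<mu> \<in> Poly_Mapping.keys ((ann_comb q f ^^ k) p)"
      "x \<in> Poly_Mapping.keys \<mu>" "\<nu> = \<mu> - Poly_Mapping.single x 1"
      using keys_ann_comb_subset[OF order.refl] by (fastforce simp: lowered_monomials_def)
    then have "total_degree \<nu> < total_degree \<mu>" using total_degree_lower by simp
    then show "total_degree \<nu> + Suc k < B" using Suc \<mu>(1) by fastforce
  qed
qed

text \<open>Annihilation operators lower the total degree, so on a fixed vector the exponential series
  terminates after a number of terms that does not depend on the coefficients.\<close>

lemma op_exp_ann_comb_finite_sum:
  "\<exists>B. \<forall>f \<mu>. op_exp (ann_comb q f) v \<mu> =
              (\<Sum>k<B. Poly_Mapping.lookup ((ann_comb q f ^^ k) v) \<mu> / fact k)"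
proof -
  define B where "B = Suc (\<Sum>\<mu>\<in>Poly_Mapping.keys v. total_degree \<mu>)"
  have "\<forall>\<mu>\<in>Poly_Mapping.keys v. total_degree \<mu> < B"
    unfolding B_def using member_le_sum[of _ "Poly_Mapping.keys v" total_degree]
    by (auto simp: less_Suc_eq_le)
  then have vanish: "(ann_comb q f ^^ k) v = 0" if "k \<ge> B" for f k
    using total_degree_ann_comb_iterate[where q=q and f=f and k=k] that
    by (metis all_not_in_conv keys_eq_empty add_lessD1 leD add.commute)
  show ?thesis
    unfolding op_exp_def
    by (intro exI[of _ B] allI suminf_finite) (auto simp: vanish not_less)
qed

lemma holomorphic_op_exp_ann_comb:
  assumes "\<And>x. (\<lambda>w. f w x) holomorphic_on S"
  shows "(\<lambda>w. op_exp (ann_comb q (f w)) v \<mu>) holomorphic_on S"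
proof -
  obtain B where B: "\<And>f \<mu>. op_exp (ann_comb q f) v \<mu> =
      (\<Sum>k<B. Poly_Mapping.lookup ((ann_comb q f ^^ k) v) \<mu> / fact k)"
    using op_exp_ann_comb_finite_sum by blast
  have "(\<lambda>w. Poly_Mapping.lookup ((ann_comb q (f w) ^^ k) v) \<mu>) holomorphic_on S" for k
    using holomorphic_lookup_ann_comb_iterate[where f=f and q=q and k=k and v=v, OF assms] by blast
  then show ?thesis unfolding B by (intro holomorphic_intros) simp_all
qed

definition H_exponent :: "complex \<Rightarrow> complex \<Rightarrow> nat \<Rightarrow> complex \<Rightarrow> mode \<Rightarrow> complex" where
  "H_exponent q qh j w = (\<lambda>x. - cplus q j (q^2 * w) x - cplus q j (1/w) x
       - Aplus q qh (2*j - 1) (q*w) x - Aplus q qh (2*j - 1) (q/w) x)"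

lemma Hop_eq_exponential:
  assumes "e \<in> {1, -1}"
  shows "Hop q qh j e w w2 v \<mu> = op_exp (ann_comb q (H_exponent q qh j (w powi e))) v \<mu>
           / ((1 - q powi e * w * w2) * (1 - q powi e * w / w2))"
proof -
  have "(\<lambda>x. - cplus q j (q powi (1 + e) * w) x - cplus q j (q powi (1 - e) / w) x
             - Aplus q qh (2 * j - 1) (q * w) x - Aplus q qh (2 * j - 1) (q / w) x)
      = H_exponent q qh j (w powi e)"
    using assms by (auto simp: H_exponent_def power2_eq_square divide_inverse algebra_simps)
  then show ?thesis unfolding Hop_def by simp
qed

lemma holomorphic_H_exponent: "q \<noteq> 0 \<Longrightarrow> (\<lambda>w. H_exponent q qh j w x) holomorphic_on -{0}"
  unfolding H_exponent_def cplus_def Aplus_def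
  by (cases x) (auto intro!: holomorphic_intros holomorphic_on_if_const)

lemma Hop_plus_inverse_w2: "Hop q qh j 1 w (inverse w2) v \<mu> = Hop q qh j 1 w w2 v \<mu>"
  by (simp add: Hop_def divide_inverse mult_ac)

locale pole_separating_contour =
  fixes \<gamma> :: "real \<Rightarrow> complex" and q w2 s :: complex
  assumes q_nonzero: "q \<noteq> 0" and w2_nonzero: "w2 \<noteq> 0"
    and valid: "valid_path \<gamma>" and simple: "simple_path \<gamma>" and closed: "pathfinish \<gamma> = pathstart \<gamma>"
    and encircled: "\<forall>z\<in>{0, s, q * w2, q / w2}. z \<notin> path_image \<gamma> \<and> winding_number \<gamma> z \<noteq> 0"
    and not_encircled: "\<forall>z\<in>{w2 / q, 1 / (q * w2)}. z \<notin> path_image \<gamma> \<and> winding_number \<gamma> z = 0"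
    and inverse_s_not_encircled: "s \<noteq> 0 \<Longrightarrow> 1 / s \<notin> path_image \<gamma> \<and> winding_number \<gamma> (1 / s) = 0"
begin

lemma off_path: "z \<in> {0, s, 1/s, 1/(q*w2), w2/q, q*w2, q/w2} \<Longrightarrow> z \<notin> path_image \<gamma>"
  using encircled not_encircled inverse_s_not_encircled by (cases "s = 0") auto

lemma winding_number_encircled:
  "z \<in> {s, q * w2, q / w2} \<Longrightarrow> winding_number \<gamma> z = winding_number \<gamma> 0"
  using encircled by (auto intro: simple_closed_path_winding_number_eq[OF simple closed])

lemma contour_integrable_off_poles:
  assumes "f holomorphic_on -{0, s, 1/s, 1/(q*w2), w2/q}"
  shows "f contour_integrable_on \<gamma>"
  by (rule contour_integrable_holomorphic_simple[OF assms _ valid])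
     (use off_path in \<open>auto intro: finite_imp_closed\<close>)

text \<open>The poles outside \<open>\<gamma>\<close> are the inverses of poles inside. For \<open>s = 0\<close> the pole \<open>1/s\<close>
  collapses to \<open>0\<close>, since \<open>1/0 = 0\<close> in HOL.\<close>

lemma has_contour_integral_inversion_antisymmetric_off_poles:
  assumes "A holomorphic_on -{0, 1/(q*w2), w2/q, 1/s}"
  shows "((\<lambda>w. A w - A (1/w) / w^2) has_contour_integral 0) \<gamma>"
proof (rule has_contour_integral_inversion_antisymmetric[OF valid closed _ _ assms])
  fix p assume p: "p \<in> {0, 1/(q*w2), w2/q, 1/s}"
  then show "p \<notin> path_image \<gamma>" using off_path by auto
  assume "p \<noteq> 0"
  with p have "1/p \<in> {s, q*w2, q/w2}" and "winding_number \<gamma> p = 0"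
    using q_nonzero w2_nonzero not_encircled inverse_s_not_encircled by auto
  then show "1/p \<notin> path_image \<gamma> \<and>
      winding_number \<gamma> p + winding_number \<gamma> (1/p) = winding_number \<gamma> 0"
    using off_path winding_number_encircled by auto
qed (use off_path in auto)

end

locale symmetric_kernel = pole_separating_contour +
  fixes E :: "complex \<Rightarrow> complex" and H :: "int \<Rightarrow> complex \<Rightarrow> complex"
  assumes E_holomorphic: "E holomorphic_on -{0}"
    and H_eq: "\<And>e w. e \<in> {1, -1} \<Longrightarrow>
       H e w = E (w powi e) / ((1 - q powi e * w * w2) * (1 - q powi e * w / w2))"
begin

lemma H_minus_reflection: "w \<noteq> 0 \<Longrightarrow> H (-1) w = q^2 / w^2 * H 1 (1/w)"
  using q_nonzero w2_nonzero
  by (simp add: H_eq power_int_minus field_simps power2_eq_square)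

lemma H_plus_holomorphic:
  assumes "S \<subseteq> -{0, 1/(q*w2), w2/q}"
  shows "H 1 holomorphic_on S"
proof -
  have "(\<lambda>w. E w / ((1 - q * w * w2) * (1 - q * w / w2))) holomorphic_on S"
  proof (intro holomorphic_intros holomorphic_on_subset[OF E_holomorphic])
    fix w assume "w \<in> S"
    then have "w \<noteq> 1/(q*w2)" "w \<noteq> w2/q" using assms by auto
    then have "1 - q * w * w2 \<noteq> 0" "1 - q * w / w2 \<noteq> 0"
      using q_nonzero w2_nonzero by (auto simp: field_simps)
    then show "(1 - q * w * w2) * (1 - q * w / w2) \<noteq> 0" by simp
  qed (use assms w2_nonzero in auto)
  moreover have "H 1 = (\<lambda>w. E w / ((1 - q * w * w2) * (1 - q * w / w2)))"
    by (simp add: H_eq fun_eq_iff)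
  ultimately show ?thesis by simp
qed

lemma contour_integrable_H_plus:
  assumes "g holomorphic_on -{0, s, 1/s}"
  shows "(\<lambda>w. g w * H 1 w) contour_integrable_on \<gamma>"
  by (rule contour_integrable_off_poles)
     (auto intro!: holomorphic_intros holomorphic_on_subset[OF assms] H_plus_holomorphic)

text \<open>Put \<open>G(w) = q (qw + 1/(qw)) H\<^sub>+(w) / w\<close> and \<open>A(w) = w (w - q w\<^sub>2) r(1/w) G(w)\<close>. By
  \<open>H_minus_reflection\<close> the \<open>\<epsilon> = -\<close> summand is \<open>-A(1/w)/w\<^sup>2\<close>, and the \<open>\<epsilon> = +\<close> summand is
  \<open>\<sigma>(w) G(w) + A(w)\<close>; the poles of \<open>A\<close> are those of \<open>H\<^sub>+\<close> outside \<open>\<gamma>\<close> and \<open>1/s\<close>.\<close>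

lemma contour_integral_symmetrize:
  assumes r: "(\<lambda>w. r (1/w)) holomorphic_on -{0, 1/s}"
    and \<sigma>: "\<sigma> holomorphic_on -{0, s, 1/s}"
    and \<sigma>_eq: "\<And>w. w \<in> path_image \<gamma> \<Longrightarrow> r w * (1 - q*w*w2) - w * (w - q*w2) * r (1/w) = \<sigma> w"
  shows "contour_integral \<gamma> (\<lambda>w. 1/w * (\<Sum>e\<in>{1, -1::int}. of_int e * q powi e
            * (q powi e * w + 1/(q powi e * w)) * r w * (1 - q*w*w2) * H e w))
       = contour_integral \<gamma> (\<lambda>w. \<sigma> w * (1/w * q * (q*w + 1/(q*w)) * H 1 w))"
    (is "contour_integral \<gamma> ?lhs = contour_integral \<gamma> ?rhs")
proof -
  define G where "G w = 1/w * q * (q*w + 1/(q*w)) * H 1 w" for w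
  define A where "A w = w * (w - q*w2) * r (1/w) * G w" for w
  have "A holomorphic_on -{0, 1/(q*w2), w2/q, 1/s}"
    unfolding A_def G_def
    by (intro holomorphic_intros holomorphic_on_subset[OF r] H_plus_holomorphic)
       (use q_nonzero in auto)
  then have "((\<lambda>w. A w - A (1/w) / w^2) has_contour_integral 0) \<gamma>"
    by (rule has_contour_integral_inversion_antisymmetric_off_poles)
  moreover have "?rhs contour_integrable_on \<gamma>"
  proof -
    have "(\<lambda>w. \<sigma> w * (1/w * q * (q*w + 1/(q*w)))) holomorphic_on -{0, s, 1/s}"
      by (intro holomorphic_intros \<sigma>) (use q_nonzero in auto)
    from contour_integrable_H_plus[OF this] show ?thesis by (simp only: mult.assoc)
  qed
  ultimately have "((\<lambda>w. ?rhs w + (A w - A (1/w) / w^2)) has_contour_integral contour_integral \<gamma> ?rhs) \<gamma>"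
    using has_contour_integral_add has_contour_integral_integral by fastforce
  moreover have "?rhs w + (A w - A (1/w) / w^2) = ?lhs w" if "w \<in> path_image \<gamma>" for w
  proof -
    have "w \<noteq> 0" using that off_path by blast
    then show ?thesis
      unfolding A_def G_def \<sigma>_eq[OF that, symmetric]
      using q_nonzero by (simp add: H_minus_reflection field_simps power2_eq_square)
  qed
  ultimately show ?thesis
    by (intro contour_integral_unique) (rule has_contour_integral_eq)
qed

lemma symmetrized_integral:
  "contour_integral \<gamma> (\<lambda>w. 1 / w * (\<Sum>e\<in>{1, -1::int}. of_int e * q powi e
      * (q powi e * w + 1 / (q powi e * w)) * (1 - q * w * w2) * H e w))
   = contour_integral \<gamma> (\<lambda>w. 1 / w * q * (q * w + 1 / (q * w)) * (1 - w ^ 2) * H 1 w)"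
proof -
  have "contour_integral \<gamma> (\<lambda>w. 1 / w * (\<Sum>e\<in>{1, -1::int}. of_int e * q powi e
      * (q powi e * w + 1 / (q powi e * w)) * (1 - q * w * w2) * H e w))
    = contour_integral \<gamma> (\<lambda>w. 1 / w * (\<Sum>e\<in>{1, -1::int}. of_int e * q powi e
      * (q powi e * w + 1 / (q powi e * w)) * 1 * (1 - q * w * w2) * H e w))"
    by (simp only: mult_1_right)
  also have "\<dots> = contour_integral \<gamma> (\<lambda>w. (1 - w^2) * (1/w * q * (q*w + 1/(q*w)) * H 1 w))"
    by (rule contour_integral_symmetrize) (auto intro!: holomorphic_intros simp: algebra_simps power2_eq_square)
  finally show ?thesis by (simp add: mult_ac)
qed

lemma symmetrized_integral_times_linear:
  "contour_integral \<gamma> (\<lambda>w. 1 / w * (\<Sum>e\<in>{1, -1::int}. of_int e * q powi e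
      * (q powi e * w + 1 / (q powi e * w)) * (1 - s * w) * (1 - q * w * w2) * H e w))
   = (1 - q * s * w2) * contour_integral \<gamma> (\<lambda>w. 1 / w * q * (q * w + 1 / (q * w)) * (1 - w ^ 2) * H 1 w)"
proof -
  have "contour_integral \<gamma> (\<lambda>w. 1 / w * (\<Sum>e\<in>{1, -1::int}. of_int e * q powi e
      * (q powi e * w + 1 / (q powi e * w)) * (1 - s * w) * (1 - q * w * w2) * H e w))
    = contour_integral \<gamma> (\<lambda>w. ((1 - q * s * w2) * (1 - w^2)) * (1/w * q * (q*w + 1/(q*w)) * H 1 w))"
  proof (rule contour_integral_symmetrize)
    fix w assume "w \<in> path_image \<gamma>"
    then have "w \<noteq> 0" using off_path by blast
    then show "(1 - s*w) * (1 - q*w*w2) - w * (w - q*w2) * (1 - s * (1/w)) = (1 - q * s * w2) * (1 - w^2)"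
      by (simp add: field_simps power2_eq_square)
  qed (auto intro!: holomorphic_intros)
  also have "\<dots> = contour_integral \<gamma> (\<lambda>w. (1 - q * s * w2) * (1/w * q * (q*w + 1/(q*w)) * (1 - w^2) * H 1 w))"
    by (simp add: mult_ac)
  also have "\<dots> = (1 - q * s * w2) * contour_integral \<gamma> (\<lambda>w. 1/w * q * (q*w + 1/(q*w)) * (1 - w^2) * H 1 w)"
    by (intro contour_integral_lmul contour_integrable_H_plus) (auto intro!: holomorphic_intros simp: q_nonzero)
  finally show ?thesis .
qed

lemma symmetrized_integral_over_linear:
  "contour_integral \<gamma> (\<lambda>w. 1 / w * (\<Sum>e\<in>{1, -1::int}. of_int e * q powi e
      * (q powi e * w + 1 / (q powi e * w)) * ((1 - q * w * w2) / (1 - s / w)) * H e w))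
   = (1 - q * s * w2) * contour_integral \<gamma> (\<lambda>w. 1 / w * q * (q * w + 1 / (q * w))
      * ((1 - w ^ 2) / ((1 - s / w) * (1 - s * w))) * H 1 w)"
proof -
  have mul_nonzero: "1 - s * w \<noteq> 0" if "w \<noteq> 1/s" for w
    using that by (cases "s = 0") (auto simp: field_simps)
  have div_nonzero: "1 - s / w \<noteq> 0" if "w \<noteq> 0" "w \<noteq> s" for w
    using that by (auto simp: field_simps)
  have "contour_integral \<gamma> (\<lambda>w. 1 / w * (\<Sum>e\<in>{1, -1::int}. of_int e * q powi e
      * (q powi e * w + 1 / (q powi e * w)) * ((1 - q * w * w2) / (1 - s / w)) * H e w))
    = contour_integral \<gamma> (\<lambda>w. 1 / w * (\<Sum>e\<in>{1, -1::int}. of_int e * q powi e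
      * (q powi e * w + 1 / (q powi e * w)) * (1 / (1 - s / w)) * (1 - q * w * w2) * H e w))"
    by (simp add: mult_ac)
  also have "\<dots> = contour_integral \<gamma> (\<lambda>w. ((1 - q * s * w2) * ((1 - w^2) / ((1 - s / w) * (1 - s * w))))
      * (1/w * q * (q*w + 1/(q*w)) * H 1 w))"
  proof (rule contour_integral_symmetrize)
    fix w assume "w \<in> path_image \<gamma>"
    then have "w \<noteq> 0" "w \<noteq> s" "w \<noteq> 1/s" using off_path by blast+
    moreover from this have "1 - s * w \<noteq> 0" "1 - s / w \<noteq> 0"
      using mul_nonzero div_nonzero by auto
    ultimately show "1 / (1 - s / w) * (1 - q * w * w2) - w * (w - q * w2) * (1 / (1 - s / (1/w)))
        = (1 - q * s * w2) * ((1 - w^2) / ((1 - s / w) * (1 - s * w)))"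
      by (simp add: field_simps power2_eq_square)
  next
    show "(\<lambda>w. 1 / (1 - s / (1/w))) holomorphic_on -{0, 1/s}"
      by (intro holomorphic_intros) (use mul_nonzero in auto)
    show "(\<lambda>w. (1 - q * s * w2) * ((1 - w^2) / ((1 - s / w) * (1 - s * w)))) holomorphic_on -{0, s, 1/s}"
      by (intro holomorphic_intros) (use mul_nonzero div_nonzero in auto)
  qed
  also have "\<dots> = contour_integral \<gamma> (\<lambda>w. (1 - q * s * w2) * (1 / w * q * (q * w + 1 / (q * w))
      * ((1 - w ^ 2) / ((1 - s / w) * (1 - s * w))) * H 1 w))"
    by (simp add: mult_ac)
  also have "\<dots> = (1 - q * s * w2) * contour_integral \<gamma> (\<lambda>w. 1 / w * q * (q * w + 1 / (q * w))
      * ((1 - w ^ 2) / ((1 - s / w) * (1 - s * w))) * H 1 w)"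
    by (intro contour_integral_lmul contour_integrable_H_plus holomorphic_intros)
       (use q_nonzero mul_nonzero div_nonzero in auto)
  finally show ?thesis .
qed

lemma symmetrized_integral_times_w:
  "contour_integral \<gamma> (\<lambda>w. 1 / w * (\<Sum>e\<in>{1, -1::int}. of_int e * q powi e
      * (q powi e * w + 1 / (q powi e * w)) * w * (1 - q * w * w2) * H e w))
   = q ^ 2 * w2 * contour_integral \<gamma> (\<lambda>w. 1 / w * (q * w + 1 / (q * w)) * (1 - w ^ 2) * H 1 w)"
proof -
  have "contour_integral \<gamma> (\<lambda>w. 1 / w * (\<Sum>e\<in>{1, -1::int}. of_int e * q powi e
      * (q powi e * w + 1 / (q powi e * w)) * w * (1 - q * w * w2) * H e w))
    = contour_integral \<gamma> (\<lambda>w. (q * w2 * (1 - w^2)) * (1/w * q * (q*w + 1/(q*w)) * H 1 w))"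
  proof (rule contour_integral_symmetrize)
    fix w assume "w \<in> path_image \<gamma>"
    then have "w \<noteq> 0" using off_path by blast
    then show "w * (1 - q * w * w2) - w * (w - q * w2) * (1/w) = q * w2 * (1 - w^2)"
      by (simp add: field_simps power2_eq_square)
  qed (auto intro!: holomorphic_intros)
  also have "\<dots> = contour_integral \<gamma> (\<lambda>w. q^2 * w2 * (1/w * (q*w + 1/(q*w)) * (1 - w^2) * H 1 w))"
    by (simp add: mult_ac power2_eq_square)
  also have "\<dots> = q^2 * w2 * contour_integral \<gamma> (\<lambda>w. 1/w * (q*w + 1/(q*w)) * (1 - w^2) * H 1 w)"
    by (intro contour_integral_lmul contour_integrable_H_plus) (auto intro!: holomorphic_intros simp: q_nonzero)
  finally show ?thesis .
qed

end

lemma Hop_symmetric_kernel: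
  assumes "pole_separating_contour \<gamma> q w2 s"
  shows "symmetric_kernel \<gamma> q w2 s (\<lambda>u. op_exp (ann_comb q (H_exponent q qh j u)) v \<mu>)
           (\<lambda>e w. Hop q qh j e w w2 v \<mu>)"
proof (intro symmetric_kernel.intro symmetric_kernel_axioms.intro assms)
  have "q \<noteq> 0" using assms by (rule pole_separating_contour.q_nonzero)
  then show "(\<lambda>u. op_exp (ann_comb q (H_exponent q qh j u)) v \<mu>) holomorphic_on -{0}"
    by (intro holomorphic_op_exp_ann_comb holomorphic_H_exponent)
qed (rule Hop_eq_exponential)

theorem mainTheorem2:
  fixes N j :: nat and q qh s w2 :: complex and \<gamma> :: "real \<Rightarrow> complex"
  assumes "1 \<le> N" and "1 \<le> j" and "j \<le> N"
    and "q \<noteq> 0" and "norm q < 1" and "qh ^ 2 = q"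
    and "w2 \<noteq> 0"
    and "valid_path \<gamma>" and "simple_path \<gamma>" and "pathfinish \<gamma> = pathstart \<gamma>"
    and "\<forall>z\<in>{0, s, q * w2, q / w2}. z \<notin> path_image \<gamma> \<and> winding_number \<gamma> z \<noteq> 0"
    and "\<forall>z\<in>{w2 / q, 1 / (q * w2)}. z \<notin> path_image \<gamma> \<and> winding_number \<gamma> z = 0"
    and "s \<noteq> 0 \<Longrightarrow> 1 / s \<notin> path_image \<gamma> \<and> winding_number \<gamma> (1 / s) = 0"
  shows "\<forall>v\<in>fock_space N.
     oint \<gamma> (\<lambda>w1 \<mu>. 1 / w1 * (\<Sum>e\<in>{1, -1::int}. of_int e * q powi e
            * (q powi e * w1 + 1 / (q powi e * w1)) * (1 - q * w1 * w2) * Hop q qh j e w1 w2 v \<mu>))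
     = oint \<gamma> (\<lambda>w1 \<mu>. 1 / w1 * q * (q * w1 + 1 / (q * w1)) * (1 - w1 ^ 2) * Hop q qh j 1 w1 w2 v \<mu>)
   \<and> oint \<gamma> (\<lambda>w1 \<mu>. 1 / w1 * (\<Sum>e\<in>{1, -1::int}. of_int e * q powi e
            * (q powi e * w1 + 1 / (q powi e * w1)) * (1 - s * w1) * (1 - q * w1 * w2)
            * Hop q qh j e w1 w2 v \<mu>))
     = (\<lambda>\<mu>. (1 - q * s * w2) * oint \<gamma> (\<lambda>w1 \<mu>. 1 / w1 * q * (q * w1 + 1 / (q * w1)) * (1 - w1 ^ 2)
            * Hop q qh j 1 w1 w2 v \<mu>) \<mu>)
   \<and> oint \<gamma> (\<lambda>w1 \<mu>. 1 / w1 * (\<Sum>e\<in>{1, -1::int}. of_int e * q powi e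
            * (q powi e * w1 + 1 / (q powi e * w1)) * ((1 - q * w1 * w2) / (1 - s / w1))
            * Hop q qh j e w1 w2 v \<mu>))
     = (\<lambda>\<mu>. (1 - q * s * w2) * oint \<gamma> (\<lambda>w1 \<mu>. 1 / w1 * q * (q * w1 + 1 / (q * w1))
            * ((1 - w1 ^ 2) / ((1 - s / w1) * (1 - s * w1))) * Hop q qh j 1 w1 w2 v \<mu>) \<mu>)
   \<and> oint \<gamma> (\<lambda>w1 \<mu>. 1 / w1 * (\<Sum>e\<in>{1, -1::int}. of_int e * q powi e
            * (q powi e * w1 + 1 / (q powi e * w1)) * w1 * (1 - q * w1 * w2) * Hop q qh j e w1 w2 v \<mu>))
     = (\<lambda>\<mu>. q ^ 2 * w2 * oint \<gamma> (\<lambda>w1 \<mu>. 1 / w1 * (q * w1 + 1 / (q * w1)) * (1 - w1 ^ 2)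
            * Hop q qh j 1 w1 w2 v \<mu>) \<mu>)
   \<and> oint \<gamma> (\<lambda>w1 \<mu>. 1 / w1 * (q * w1 + 1 / (q * w1))
            * ((1 - w1 ^ 2) / ((1 - s / w1) * (1 - s * w1))) * Hop q qh j 1 w1 w2 v \<mu>)
     = oint \<gamma> (\<lambda>w1 \<mu>. 1 / w1 * (q * w1 + 1 / (q * w1))
            * ((1 - w1 ^ 2) / ((1 - s / w1) * (1 - s * w1))) * Hop q qh j 1 w1 (inverse w2) v \<mu>)"
proof -
  have "pole_separating_contour \<gamma> q w2 s"
    using assms by (intro pole_separating_contour.intro) auto
  then have kernel: "symmetric_kernel \<gamma> q w2 s (\<lambda>u. op_exp (ann_comb q (H_exponent q qh j u)) v \<mu>)
      (\<lambda>e w. Hop q qh j e w w2 v \<mu>)" for v \<mu>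
    by (rule Hop_symmetric_kernel)
  show ?thesis
    unfolding oint_def
    by (intro ballI conjI; rule ext)
       (rule symmetric_kernel.symmetrized_integral[OF kernel],
        rule symmetric_kernel.symmetrized_integral_times_linear[OF kernel],
        rule symmetric_kernel.symmetrized_integral_over_linear[OF kernel],
        rule symmetric_kernel.symmetrized_integral_times_w[OF kernel],
        simp only: Hop_plus_inverse_w2)
qed

end
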